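(* Let $(\Gamma_n)$ be a sequence of invertible $n\times n$ correlation matrices satisfying the Correlation Condition with bounding function $g$, and let $S=\sup_n\|\Gamma_n^{-1}\|_{\max}$. Fix $\alpha\ge1$. Then there is $n_0$ such that for all $n\ge n_0$ and every positive integer $q$, $$\sum_{y\in\mathcal{M}_{n,q}}\exp\big(-\log(\alpha n)\,y^T\Gamma_n y\big)\ \le\ \exp\big((2+S)\,g(\alpha)\big),$$ where $\mathcal{M}_{n,q}=\{y\in(\mathbb{Z}\cap[-q/2,q/2))^n:\ \|2\pi y/q\|_\infty\le 1/\sqrt q\}$.
   Context: $\|M\|_{\max}=\max_{a,b}|M_{ab}|$. Correlation Condition for a sequence $(\Gamma_n)$ of invertible $n\times n$ correlation matrices, with $\Psi_n=\Gamma_n^{-1}$: (i) $\sup_n\|\Psi_n\|_{\max}<\infty$; (ii) letting $\Psi_{n,k}$ be the principal submatrix of the first $k$ rows and columns of $\Psi_n$, partitioned as $\begin{bmatrix}\Psi^{(11)}_{n,k}&\Psi^{(12)}_{n,k}\\\Psi^{(21)}_{n,k}&\Psi^{(22)}_{n,k}\end{bmatrix}$ with $\Psi^{(11)}_{n,k}$ the leading $(k-1)\times(k-1)$ block and $\Psi^{(22)}_{n,k}$ the $(k,k)$ entry, define $a^{(n)}_1=(\Psi_n)_{11}^{-1}$ and $a^{(n)}_k=\big(\Psi^{(22)}_{n,k}-\Psi^{(21)}_{n,k}(\Psi^{(11)}_{n,k})^{-1}\Psi^{(12)}_{n,k}\big)^{-1}$ for $k\ge2$; then there is a monotone decreasing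 $g:[1,\infty)\to[0,\infty)$ independent of $n$ with $g(\alpha)\to0$ as $\alpha\to\infty$ and $\sup_n\sum_{k=1}^n(\alpha n)^{-a_k^{(n)}}\le g(\alpha)$ for all $\alpha\ge1$. *)

theory Defs
  imports "HOL-Analysis.Analysis" "Jordan_Normal_Form.Matrix"
begin

definition correlation_mat :: "nat \<Rightarrow> real mat \<Rightarrow> bool" where
  "correlation_mat n A \<longleftrightarrow> A \<in> carrier_mat n n \<and> A\<^sup>T = A \<and>
     (\<forall>i<n. A $$ (i,i) = 1) \<and> (\<forall>x \<in> carrier_vec n. 0 \<le> x \<bullet> (A *\<^sub>v x))"

definition mat_inv :: "real mat \<Rightarrow> real mat" where
  "mat_inv A = (THE B. B \<in> carrier_mat (dim_row A) (dim_row A) \<and>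
      A * B = 1\<^sub>m (dim_row A) \<and> B * A = 1\<^sub>m (dim_row A))"

definition max_norm :: "real mat \<Rightarrow> real" where
  "max_norm M = Max {\<bar>M $$ (a,b)\<bar> | a b. a < dim_row M \<and> b < dim_col M}"

definition lead_sub :: "nat \<Rightarrow> real mat \<Rightarrow> real mat" where
  "lead_sub k M = mat k k (\<lambda>(i,j). M $$ (i,j))"

text \<open>The quantities a_k (1-based k) from the Correlation Condition, for Psi = inverse of Gam.
  For k \<ge> 2, with Psi_{n,k} partitioned into the leading (k-1)x(k-1) block P11,
  the column P12, the row P21 and the (k,k) entry P22 (0-based index k-1),
  a_k = (P22 - P21 P11^{-1} P12)^{-1}.\<close>
definition a_coef :: "real mat \<Rightarrow> nat \<Rightarrow> real" where
  "a_coef Psi k =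
     (if k = 1 then inverse (Psi $$ (0,0))
      else inverse (Psi $$ (k-1,k-1)
        - vec (k-1) (\<lambda>j. Psi $$ (k-1, j)) \<bullet>
            (mat_inv (lead_sub (k-1) Psi) *\<^sub>v vec (k-1) (\<lambda>i. Psi $$ (i, k-1)))))"

definition correlation_condition :: "(nat \<Rightarrow> real mat) \<Rightarrow> (real \<Rightarrow> real) \<Rightarrow> bool" where
  "correlation_condition Gam g \<longleftrightarrow>
     (\<forall>n\<ge>1. correlation_mat n (Gam n) \<and> invertible_mat (Gam n)) \<and>
     bdd_above ((\<lambda>n. max_norm (mat_inv (Gam n))) ` {1..}) \<and>
     antimono_on {1..} g \<and> (\<forall>\<alpha>\<ge>1. 0 \<le> g \<alpha>) \<and> (g \<longlongrightarrow> 0) at_top \<and>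
     (\<forall>\<alpha>\<ge>1. \<forall>n\<ge>1. (\<Sum>k=1..n. (\<alpha> * real n) powr (- a_coef (mat_inv (Gam n)) k)) \<le> g \<alpha>)"

definition M_set :: "nat \<Rightarrow> nat \<Rightarrow> real vec set" where
  "M_set n q = {y \<in> carrier_vec n. (\<forall>i<n. y $ i \<in> \<int> \<and> - real q / 2 \<le> y $ i \<and> y $ i < real q / 2) \<and>
      (MAX i\<in>{0..<n}. \<bar>2 * pi * y $ i / real q\<bar>) \<le> 1 / sqrt (real q)}"

end

theory Submission
  imports Defs "Jordan_Normal_Form.Determinant"
begin

text \<open>Write \<open>\<Psi> = \<Gamma>\<inverse>\<close>. Completing squares along the leading principal blocks of \<open>\<Psi>\<close>,
  whose Schur complements are the \<open>1 / a_k\<close>, gives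
  \<open>y\<^sup>T \<Gamma> y \<ge> \<Sum>_k a_k (y_k + \<Sum>_{i<k} u_{ki} y_i)\<^sup>2\<close>. So with \<open>L = log (\<alpha> n)\<close> the summand
  \<open>exp (-L y\<^sup>T \<Gamma> y)\<close> is dominated by a product of one-dimensional Gaussians in triangular
  coordinates. Summing out the integer coordinates from the last one down, each coordinate costs a
  shifted lattice sum \<open>\<Sum>_j exp (-L a_k (j + t)\<^sup>2)\<close>, which is at most \<open>exp (3 exp (-L a_k))\<close>
  uniformly in \<open>t\<close> once \<open>L a_k \<ge> 500\<close>; the Correlation Condition forces this for large \<open>n\<close>
  because \<open>g\<close> tends to \<open>0\<close>. Finally \<open>\<Sum>_k exp (-L a_k) = \<Sum>_k (\<alpha> n)^(-a_k) \<le> g \<alpha>\<close>, and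
  \<open>3 \<le> 2 + S\<close> because \<open>\<Gamma>\<^sub>1 = (1)\<close> forces \<open>S \<ge> 1\<close>.\<close>

section \<open>Sums of discrete Gaussians on the integers\<close>

lemma sum_power_le_geometric:
  fixes x :: real and A :: "nat set"
  assumes "finite A" "A \<subseteq> {m..}" "0 \<le> x" "x < 1"
  shows "(\<Sum>k\<in>A. x ^ k) \<le> x ^ m / (1 - x)"
proof -
  define B where "B = (\<lambda>k. k - m) ` A"
  have A_eq: "A = (\<lambda>i. i + m) ` B" using assms(2) unfolding B_def by force
  have "(\<Sum>k\<in>A. x ^ k) = x ^ m * (\<Sum>i\<in>B. x ^ i)"
    unfolding A_eq by (subst sum.reindex) (auto simp: inj_on_def power_add sum_distrib_left mult.commute)
  also have "(\<Sum>i\<in>B. x ^ i) \<le> (\<Sum>i. x ^ i)"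
    by (rule sum_le_suminf) (use assms in \<open>auto simp: B_def intro!: summable_geometric\<close>)
  also have "(\<Sum>i. x ^ i) = 1 / (1 - x)" using assms by (intro suminf_geometric) auto
  finally show ?thesis using assms by (simp add: mult_left_mono)
qed

lemma exp_neg_le_half: "1 \<le> u \<Longrightarrow> exp (- u) \<le> (1 / 2 :: real)"
proof -
  assume "1 \<le> u"
  hence "exp (- u) \<le> exp (- 1)" by simp
  also have "2 \<le> exp (1::real)" using exp_ge_add_one_self[of 1] by simp
  hence "exp (- 1) \<le> (1 / 2 :: real)" by (simp add: exp_minus divide_simps)
  finally show ?thesis .
qed

lemma exp_neg_le_one_minus_half:
  fixes z :: real assumes "0 \<le> z" "z \<le> 1" shows "exp (- z) \<le> 1 - z / 2"
proof -
  have "exp (- z) \<le> 1 / (1 + z)"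
    using exp_ge_add_one_self[of z] assms by (simp add: exp_minus divide_simps)
  also have "1 \<le> (1 - z / 2) * (1 + z)"
    using mult_left_mono[of z 1 z] assms by (simp add: algebra_simps)
  hence "1 / (1 + z) \<le> 1 - z / 2" using assms by (subst pos_divide_le_eq) auto
  finally show ?thesis .
qed

lemma exp_gauss_two_nearest_le:
  fixes u d :: real
  assumes u: "500 \<le> u" and d: "0 \<le> d" "d \<le> 1/2"
  shows "exp (- u * d\<^sup>2) + exp (- u * (1 - d)\<^sup>2) \<le> 1 + 2 * exp (- u)"
proof -
  consider "u * d \<le> 1/4" | "1/4 < u * d" "d \<le> 1/4" | "1/4 < d" by linarith
  then show ?thesis
  proof cases
    case 1
    have "- u * (1 - d)\<^sup>2 \<le> - u + 1/2"
      using 1 u d by (simp add: power2_eq_square algebra_simps) (smt (verit) mult_nonneg_nonneg)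
    hence "exp (- u * (1 - d)\<^sup>2) \<le> exp (- u) * exp (1/2)" by (simp flip: exp_add)
    also have "exp (1/2 :: real) \<le> 2"
    proof -
      have "exp (1/2::real) ^ 2 = exp 1" by (simp flip: exp_of_nat_mult)
      also have "\<dots> \<le> 2 ^ 2" using exp_le by simp
      finally show ?thesis by (rule power2_le_imp_le) simp
    qed
    finally have far: "exp (- u * (1 - d)\<^sup>2) \<le> 2 * exp (- u)" by simp
    have "exp (- u * d\<^sup>2) \<le> 1" using u by simp
    with far show ?thesis by linarith
  next
    case 2
    have "1 / (16 * u) \<le> u * d\<^sup>2"
      using 2 u mult_mono[of "1/4" "u * d" "1/4" "u * d"] by (simp add: power2_eq_square field_simps)
    hence "exp (- u * d\<^sup>2) \<le> exp (- (1 / (16 * u)))" by simp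
    also have "\<dots> \<le> 1 - 1 / (32 * u)" using exp_neg_le_one_minus_half[of "1 / (16 * u)"] u by simp
    finally have near: "exp (- u * d\<^sup>2) \<le> 1 - 1 / (32 * u)" .
    have "9/16 \<le> (1 - d)\<^sup>2"
      using 2 mult_mono[of "3/4" "1 - d" "3/4" "1 - d"] by (simp add: power2_eq_square)
    hence "9/16 * u \<le> u * (1 - d)\<^sup>2" using u by (simp add: mult.commute mult_left_mono)
    hence far: "exp (- u * (1 - d)\<^sup>2) \<le> exp (- (9/16 * u))" by simp
    have "32 * u \<le> exp (9/16 * u)"
    proof -
      have "500 * u \<le> u * u" using u by (simp add: mult_right_mono)
      moreover have "(9/16 * u)\<^sup>2 / 2 = 81/512 * (u * u)" by (simp add: power2_eq_square)
      ultimately show ?thesis using exp_lower_Taylor_quadratic[of "9/16 * u"] u by linarith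
    qed
    hence "exp (- (9/16 * u)) \<le> 1 / (32 * u)" using u by (simp add: exp_minus field_simps)
    with near far show ?thesis using exp_gt_zero[of "- u"] by linarith
  next
    case 3
    have "1/16 \<le> d\<^sup>2" "1/16 \<le> (1 - d)\<^sup>2"
      using 3 d mult_mono[of "1/4" d "1/4" d] mult_mono[of "1/4" "1 - d" "1/4" "1 - d"]
      by (simp_all add: power2_eq_square)
    hence "u / 16 \<le> u * d\<^sup>2" "u / 16 \<le> u * (1 - d)\<^sup>2"
      using u mult_left_mono[of "1/16" _ u] by simp_all
    hence "exp (- u * d\<^sup>2) \<le> exp (- (u / 16))" "exp (- u * (1 - d)\<^sup>2) \<le> exp (- (u / 16))"
      by simp_all
    moreover have "exp (- (u / 16)) \<le> 1 / 2" using u by (intro exp_neg_le_half) simp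
    ultimately show ?thesis using exp_gt_zero[of "- u"] by linarith
  qed
qed

lemma sum_power_nat_le_geometric:
  fixes x :: real and J :: "int set"
  assumes "finite J" "J \<subseteq> {m..}" "0 \<le> m" "0 \<le> x" "x < 1"
  shows "(\<Sum>K\<in>J. x ^ nat K) \<le> x ^ nat m / (1 - x)"
proof -
  have "inj_on nat J" using assms by (intro inj_onI) (metis atLeast_iff eq_nat_nat_iff order_trans subsetD)
  hence "(\<Sum>K\<in>J. x ^ nat K) = (\<Sum>k\<in>nat ` J. x ^ k)" by (simp add: sum.reindex)
  also have "\<dots> \<le> x ^ nat m / (1 - x)"
    using assms by (intro sum_power_le_geometric) auto
  finally show ?thesis .
qed

lemma exp_gauss_lattice_sum_centered_le:
  fixes u d :: real and J :: "int set"
  assumes u: "500 \<le> u" and d: "0 \<le> d" "d \<le> 1/2" and J: "finite J"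
  shows "(\<Sum>K\<in>J. exp (- u * (of_int K + d)\<^sup>2)) \<le> exp (3 * exp (- u))"
proof -
  define x where "x = exp (- u)"
  define f where "f K = exp (- u * (of_int K + d)\<^sup>2)" for K :: int
  have x: "0 < x" "x \<le> 1/2" unfolding x_def using exp_neg_le_half[of u] u by auto
  have f_le: "f K \<le> x ^ nat m" if "real_of_int m \<le> (of_int K + d)\<^sup>2" "0 \<le> m" for K m
  proof -
    have "f K \<le> exp (- (real (nat m) * u))"
      unfolding f_def using that u mult_left_mono[OF that(1), of u] by (simp add: mult.commute)
    also have "\<dots> = x ^ nat m" unfolding x_def by (simp flip: exp_of_nat_mult)
    finally show ?thesis .
  qed
  define J0 J1 J2 where "J0 = J \<inter> {-1, 0}" and "J1 = J \<inter> {1..}" and "J2 = J \<inter> {..-2}"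
  have "sum f J = sum f J0 + sum f J1 + sum f J2"
  proof -
    have "J = J0 \<union> J1 \<union> J2" unfolding J0_def J1_def J2_def by auto
    moreover have "finite J0" "finite J1" "finite J2" using J unfolding J0_def J1_def J2_def by auto
    moreover have "J0 \<inter> J1 = {}" "(J0 \<union> J1) \<inter> J2 = {}" unfolding J0_def J1_def J2_def by auto
    ultimately show ?thesis by (simp add: sum.union_disjoint)
  qed
  moreover have "sum f J0 \<le> 1 + 2 * x"
  proof -
    have "sum f J0 \<le> sum f {-1, 0}" unfolding J0_def f_def by (intro sum_mono2) auto
    also have "\<dots> = exp (- u * d\<^sup>2) + exp (- u * (1 - d)\<^sup>2)" by (simp add: f_def power2_commute)
    finally show ?thesis unfolding x_def using exp_gauss_two_nearest_le[OF u d] by linarith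
  qed
  moreover have "sum f J1 \<le> x + 2 * x\<^sup>2"
  proof -
    have "sum f J1 \<le> (\<Sum>K\<in>J1. x ^ nat K)"
    proof (rule sum_mono, rule f_le)
      fix K assume "K \<in> J1"
      hence "1 \<le> K" unfolding J1_def by auto
      thus "real_of_int K \<le> (of_int K + d)\<^sup>2" "0 \<le> K"
        using d mult_mono[of "real_of_int K" "of_int K + d" 1 "of_int K + d"]
        by (simp_all add: power2_eq_square)
    qed
    also have "\<dots> \<le> x ^ nat 1 / (1 - x)"
      using J x by (intro sum_power_nat_le_geometric) (auto simp: J1_def)
    also have "\<dots> \<le> x + 2 * x\<^sup>2"
      using x mult_nonneg_nonneg[of "x\<^sup>2" "1 - 2 * x"]
      by (simp add: field_simps power2_eq_square power3_eq_cube)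
    finally show ?thesis .
  qed
  moreover have "sum f J2 \<le> 2 * x\<^sup>2"
  proof -
    have "sum f J2 = (\<Sum>K\<in>uminus ` J2. f (- K))" by (simp add: sum.reindex inj_on_def)
    also have "\<dots> \<le> (\<Sum>K\<in>uminus ` J2. x ^ nat K)"
    proof (rule sum_mono, rule f_le)
      fix K assume "K \<in> uminus ` J2"
      hence K: "2 \<le> K" unfolding J2_def by auto
      have "2 * real_of_int K \<le> of_int K * of_int K" using K by (intro mult_right_mono) auto
      hence "real_of_int K \<le> (of_int K - 1/2)\<^sup>2" by (simp add: power2_eq_square algebra_simps)
      also have "\<dots> \<le> (of_int K - d)\<^sup>2" using K d by (intro power_mono) auto
      finally show "real_of_int K \<le> (of_int (- K) + d)\<^sup>2" "0 \<le> K"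
        using K by (simp_all add: power2_commute)
    qed
    also have "\<dots> \<le> x ^ nat 2 / (1 - x)"
      using J x by (intro sum_power_nat_le_geometric) (auto simp: J2_def)
    also have "\<dots> \<le> 2 * x\<^sup>2"
      using x mult_nonneg_nonneg[of "x\<^sup>2" "1 - 2 * x"] by (simp add: field_simps power2_eq_square)
    finally show ?thesis .
  qed
  ultimately have "sum f J \<le> 1 + 3 * x + 4 * x\<^sup>2" by linarith
  also have "\<dots> \<le> 1 + 3 * x + (3 * x)\<^sup>2 / 2" by (simp add: power2_eq_square)
  also have "\<dots> \<le> exp (3 * x)" using x by (intro exp_lower_Taylor_quadratic) auto
  finally show ?thesis unfolding f_def x_def .
qed

lemma exp_gauss_lattice_sum_le:
  fixes u t :: real and J :: "int set"
  assumes u: "500 \<le> u" and J: "finite J"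
  shows "(\<Sum>j\<in>J. exp (- u * (of_int j + t)\<^sup>2)) \<le> exp (3 * exp (- u))"
proof -
  define k where "k = round t"
  define d where "d = \<bar>t - of_int k\<bar>"
  have d: "0 \<le> d" "d \<le> 1/2" unfolding d_def k_def using of_int_round_abs_le[of t] by (auto simp: abs_minus_commute)
  show ?thesis
  proof (cases "of_int k \<le> t")
    case True
    have "(\<Sum>j\<in>J. exp (- u * (of_int j + t)\<^sup>2)) = (\<Sum>K\<in>(\<lambda>j. j + k) ` J. exp (- u * (of_int K + d)\<^sup>2))"
      using True by (simp add: sum.reindex inj_on_def d_def)
    also have "\<dots> \<le> exp (3 * exp (- u))" using J by (intro exp_gauss_lattice_sum_centered_le u d) auto
    finally show ?thesis .
  next
    case False
    have "(of_int j + t)\<^sup>2 = (of_int (- j - k) + d)\<^sup>2" for j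
      using False by (simp add: d_def power2_eq_square algebra_simps)
    hence "(\<Sum>j\<in>J. exp (- u * (of_int j + t)\<^sup>2)) = (\<Sum>K\<in>(\<lambda>j. - j - k) ` J. exp (- u * (of_int K + d)\<^sup>2))"
      by (simp add: sum.reindex inj_on_def del: of_int_diff of_int_minus)
    also have "\<dots> \<le> exp (3 * exp (- u))" using J by (intro exp_gauss_lattice_sum_centered_le u d) auto
    finally show ?thesis .
  qed
qed

section \<open>Gaussian sums over integer vectors with a triangular change of variables\<close>

text \<open>The \<open>k\<close>-th factor depends only on \<open>f 0, \<dots>, f k\<close>, and on \<open>f k\<close> through an integer
  shift, so the coordinates can be summed out from the last one down.\<close>
definition triangular_gauss_factor ::
  "(nat \<Rightarrow> real) \<Rightarrow> (nat \<Rightarrow> nat \<Rightarrow> real) \<Rightarrow> nat \<Rightarrow> (nat \<Rightarrow> int) \<Rightarrow> real" where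
  "triangular_gauss_factor u w k f = exp (- u k * (of_int (f k) + (\<Sum>i<k. w k i * of_int (f i)))\<^sup>2)"

lemma triangular_gauss_factor_fun_upd:
  "k < m \<Longrightarrow> triangular_gauss_factor u w k (f(m := j)) = triangular_gauss_factor u w k f"
  unfolding triangular_gauss_factor_def by (auto intro!: sum.cong)

lemma sum_PiE_prod_triangular_gauss_factor_le:
  fixes u :: "nat \<Rightarrow> real" and w :: "nat \<Rightarrow> nat \<Rightarrow> real" and T :: "int set"
  assumes "\<And>k. k < m \<Longrightarrow> 500 \<le> u k" and T: "finite T"
  shows "(\<Sum>f\<in>Pi\<^sub>E {..<m} (\<lambda>_. T). \<Prod>k<m. triangular_gauss_factor u w k f)
    \<le> (\<Prod>k<m. exp (3 * exp (- u k)))"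
  using assms(1)
proof (induction m)
  case 0
  then show ?case by simp
next
  case (Suc m)
  let ?F = "triangular_gauss_factor u w" and ?T = "Pi\<^sub>E {..<m} (\<lambda>_. T)"
  have last: "(\<Sum>j\<in>T. ?F m (f(m := j))) \<le> exp (3 * exp (- u m))" for f
  proof -
    have "(\<Sum>j\<in>T. ?F m (f(m := j)))
        = (\<Sum>j\<in>T. exp (- u m * (of_int j + (\<Sum>i<m. w m i * of_int (f i)))\<^sup>2))"
      unfolding triangular_gauss_factor_def by (auto intro!: sum.cong)
    also have "\<dots> \<le> exp (3 * exp (- u m))" using Suc.prems[of m] T by (intro exp_gauss_lattice_sum_le) auto
    finally show ?thesis .
  qed
  have "(\<Sum>f\<in>Pi\<^sub>E {..<Suc m} (\<lambda>_. T). \<Prod>k<Suc m. ?F k f)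
      = (\<Sum>(j, f)\<in>T \<times> ?T. \<Prod>k<Suc m. ?F k (f(m := j)))"
    unfolding lessThan_Suc PiE_insert_eq
    by (subst sum.reindex) (auto intro!: inj_combinator simp: case_prod_beta)
  also have "\<dots> = (\<Sum>f\<in>?T. (\<Prod>k<m. ?F k f) * (\<Sum>j\<in>T. ?F m (f(m := j))))"
    by (subst sum.cartesian_product[symmetric], subst sum.swap)
       (simp add: triangular_gauss_factor_fun_upd sum_distrib_left)
  also have "\<dots> \<le> (\<Sum>f\<in>?T. (\<Prod>k<m. ?F k f) * exp (3 * exp (- u m)))"
    using last by (intro sum_mono mult_left_mono prod_nonneg) (auto simp: triangular_gauss_factor_def)
  also have "\<dots> \<le> (\<Prod>k<m. exp (3 * exp (- u k))) * exp (3 * exp (- u m))"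
    using Suc by (simp flip: sum_distrib_right)
  finally show ?case by simp
qed

section \<open>A lower bound for a quadratic form through its inverse\<close>

definition bilin :: "nat \<Rightarrow> (nat \<Rightarrow> nat \<Rightarrow> real) \<Rightarrow> (nat \<Rightarrow> real) \<Rightarrow> (nat \<Rightarrow> real) \<Rightarrow> real" where
  "bilin n A x y = (\<Sum>i<n. x i * (\<Sum>j<n. A i j * y j))"

lemma bilin_add_left: "bilin n A (\<lambda>i. x i + x' i) y = bilin n A x y + bilin n A x' y"
  unfolding bilin_def by (simp add: distrib_right sum.distrib)

lemma bilin_add_right: "bilin n A x (\<lambda>i. y i + y' i) = bilin n A x y + bilin n A x y'"
  unfolding bilin_def by (simp add: distrib_left sum.distrib)

lemma bilin_scale_left: "bilin n A (\<lambda>i. t * x i) y = t * bilin n A x y"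
  unfolding bilin_def by (simp add: sum_distrib_left mult.assoc)

lemma bilin_scale_right: "bilin n A x (\<lambda>i. t * y i) = t * bilin n A x y"
  unfolding bilin_def by (simp add: sum_distrib_left algebra_simps)

lemma bilin_sum_left: "bilin n A (\<lambda>i. \<Sum>k\<in>K. x k i) y = (\<Sum>k\<in>K. bilin n A (x k) y)"
  unfolding bilin_def sum_distrib_right by (rule sum.swap)

lemma bilin_sum_right: "bilin n A x (\<lambda>j. \<Sum>l\<in>L. y l j) = (\<Sum>l\<in>L. bilin n A x (y l))"
proof -
  have "bilin n A x (\<lambda>j. \<Sum>l\<in>L. y l j) = (\<Sum>i<n. \<Sum>l\<in>L. x i * (\<Sum>j<n. A i j * y l j))"
    unfolding bilin_def by (simp add: sum_distrib_left flip: sum.swap[of _ L])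
  also have "\<dots> = (\<Sum>l\<in>L. bilin n A x (y l))" unfolding bilin_def by (rule sum.swap)
  finally show ?thesis .
qed

lemmas bilin_linear = bilin_add_left bilin_add_right bilin_scale_left bilin_scale_right

lemma bilin_cong:
  "(\<And>i. i < n \<Longrightarrow> x i = x' i) \<Longrightarrow> (\<And>i. i < n \<Longrightarrow> y i = y' i) \<Longrightarrow> bilin n A x y = bilin n A x' y'"
  unfolding bilin_def by (auto intro!: sum.cong)

lemma bilin_commute:
  assumes "\<And>i j. i < n \<Longrightarrow> j < n \<Longrightarrow> A i j = A j i"
  shows "bilin n A x y = bilin n A y x"
proof -
  have "bilin n A x y = (\<Sum>i<n. \<Sum>j<n. x i * A i j * y j)"
    unfolding bilin_def by (simp add: sum_distrib_left mult.assoc)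
  also have "\<dots> = (\<Sum>j<n. \<Sum>i<n. y j * A j i * x i)"
    using assms by (subst sum.swap) (auto intro!: sum.cong simp: mult.commute mult.left_commute)
  also have "\<dots> = bilin n A y x" unfolding bilin_def by (simp add: sum_distrib_left mult.assoc)
  finally show ?thesis .
qed

text \<open>Otherwise \<open>w - \<theta> A w\<close> would have negative form value for small \<open>\<theta> > 0\<close>.\<close>
lemma psd_bilin_self_eq_0_imp_mult_eq_0:
  assumes sym: "\<And>i j. i < n \<Longrightarrow> j < n \<Longrightarrow> A i j = A j i"
    and psd: "\<And>x. 0 \<le> bilin n A x x"
    and w0: "bilin n A w w = 0"
    and i: "i < n"
  shows "(\<Sum>j<n. A i j * w j) = 0"
proof -
  define z where "z i = (\<Sum>j<n. A i j * w j)" for i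
  define b where "b = (\<Sum>i<n. z i * z i)"
  define c where "c = bilin n A z z"
  have c: "0 \<le> c" unfolding c_def by (rule psd)
  have zw: "bilin n A z w = b" unfolding bilin_def b_def z_def ..
  have wz: "bilin n A w z = b" using bilin_commute[of n A w z] sym zw by simp
  have expand: "bilin n A (\<lambda>i. w i + t * z i) (\<lambda>i. w i + t * z i) = 2 * t * b + t * t * c" for t
    by (simp add: bilin_linear w0 zw wz c_def algebra_simps)
  have "b = 0"
  proof (rule ccontr)
    assume "b \<noteq> 0"
    moreover have "0 \<le> b" unfolding b_def by (intro sum_nonneg) auto
    ultimately have b: "0 < b" by simp
    define \<theta> where "\<theta> = b / (c + 1)"
    have "0 < \<theta>" "\<theta> * c < b" unfolding \<theta>_def using b c by (simp_all add: field_simps)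
    hence "\<theta> * (- 2 * b + \<theta> * c) < 0" using b by (intro mult_pos_neg) auto
    moreover have "0 \<le> 2 * (- \<theta>) * b + (- \<theta>) * (- \<theta>) * c"
      using psd[of "\<lambda>i. w i + (- \<theta>) * z i"] unfolding expand .
    ultimately show False by (simp add: algebra_simps)
  qed
  hence "\<forall>i\<in>{..<n}. z i * z i = 0" unfolding b_def
    by (subst sum_nonneg_eq_0_iff[symmetric]) auto
  thus ?thesis using i unfolding z_def by auto
qed

lemma bilin_inverse_pos_def:
  assumes GP: "\<And>i l. i < n \<Longrightarrow> l < n \<Longrightarrow> (\<Sum>j<n. G i j * P j l) = (if i = l then 1 else 0)"
    and Gsym: "\<And>i j. i < n \<Longrightarrow> j < n \<Longrightarrow> G i j = G j i"
    and Gpsd: "\<And>x. 0 \<le> bilin n G x x"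
  shows "0 \<le> bilin n P x x" and "bilin n P x x = 0 \<Longrightarrow> i < n \<Longrightarrow> x i = 0"
proof -
  define w where "w i = (\<Sum>j<n. P i j * x j)" for i
  have Gw: "(\<Sum>j<n. G i j * w j) = x i" if "i < n" for i
  proof -
    have "(\<Sum>j<n. G i j * w j) = (\<Sum>j<n. \<Sum>l<n. G i j * P j l * x l)"
      unfolding w_def by (simp add: sum_distrib_left mult.assoc)
    also have "\<dots> = (\<Sum>l<n. (\<Sum>j<n. G i j * P j l) * x l)"
      by (subst sum.swap) (simp add: sum_distrib_right)
    also have "\<dots> = (\<Sum>l<n. if i = l then x l else 0)" using GP that by (intro sum.cong) auto
    also have "\<dots> = x i" using that by simp
    finally show ?thesis .
  qed
  have Pw: "bilin n P x x = bilin n G w w"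
    unfolding bilin_def using Gw by (auto simp: w_def mult.commute intro!: sum.cong)
  show "0 \<le> bilin n P x x" unfolding Pw by (rule Gpsd)
  assume "bilin n P x x = 0" "i < n"
  thus "x i = 0" using psd_bilin_self_eq_0_imp_mult_eq_0[OF Gsym Gpsd, of w i] Gw Pw by simp
qed

text \<open>Legendre duality for quadratic forms: \<open>y\<^sup>T G y = max\<^sub>u (2 u\<^sup>T y - u\<^sup>T G\<^sup>-\<^sup>1 u)\<close>,
  the inequality being \<open>0 \<le> (u - G y)\<^sup>T P (u - G y)\<close>.\<close>
lemma bilin_ge_dual:
  assumes PG: "\<And>i l. i < n \<Longrightarrow> l < n \<Longrightarrow> (\<Sum>j<n. P i j * G j l) = (if i = l then 1 else 0)"
    and Psym: "\<And>i j. i < n \<Longrightarrow> j < n \<Longrightarrow> P i j = P j i"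
    and Ppsd: "\<And>x. 0 \<le> bilin n P x x"
  shows "2 * (\<Sum>i<n. u i * y i) - bilin n P u u \<le> bilin n G y y"
proof -
  define z where "z i = (\<Sum>j<n. G i j * y j)" for i
  have Pz: "(\<Sum>j<n. P i j * z j) = y i" if "i < n" for i
  proof -
    have "(\<Sum>j<n. P i j * z j) = (\<Sum>j<n. \<Sum>l<n. P i j * G j l * y l)"
      unfolding z_def by (simp add: sum_distrib_left mult.assoc)
    also have "\<dots> = (\<Sum>l<n. (\<Sum>j<n. P i j * G j l) * y l)"
      by (subst sum.swap) (simp add: sum_distrib_right)
    also have "\<dots> = (\<Sum>l<n. if i = l then y l else 0)" using PG that by (intro sum.cong) auto
    also have "\<dots> = y i" using that by simp
    finally show ?thesis .
  qed
  have uz: "bilin n P u z = (\<Sum>i<n. u i * y i)" unfolding bilin_def using Pz by simp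
  have zu: "bilin n P z u = (\<Sum>i<n. u i * y i)" using bilin_commute[of n P z u] Psym uz by simp
  have zz: "bilin n P z z = bilin n G y y"
    unfolding bilin_def using Pz by (simp add: z_def mult.commute)
  have "0 \<le> bilin n P (\<lambda>i. u i + (-1) * z i) (\<lambda>i. u i + (-1) * z i)" by (rule Ppsd)
  also have "\<dots> = bilin n P u u - 2 * (\<Sum>i<n. u i * y i) + bilin n G y y"
    by (simp only: bilin_linear uz zu zz)
  finally show ?thesis by simp
qed

lemma bilin_triangular_orthogonal:
  assumes Psym: "\<And>i j. i < n \<Longrightarrow> j < n \<Longrightarrow> P i j = P j i"
    and U_upper: "\<And>k i. k < i \<Longrightarrow> U k i = 0"
    and U_diag: "\<And>k. U k k = 1"
    and PU_upper: "\<And>k i. k < n \<Longrightarrow> i < k \<Longrightarrow> (\<Sum>j<n. P i j * U k j) = 0"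
    and PU_diag: "\<And>k. k < n \<Longrightarrow> (\<Sum>j<n. P k j * U k j) = s k"
    and kl: "k < n" "l < n"
  shows "bilin n P (U k) (U l) = (if k = l then s k else 0)"
proof -
  have below: "bilin n P (U a) (U b) = 0" if "a < b" "b < n" for a b
    unfolding bilin_def using that
    by (intro sum.neutral ballI) (metis PU_upper U_upper le_less_trans mult_eq_0_iff not_le)
  consider "k < l" | "k = l" | "l < k" by linarith
  thus ?thesis
  proof cases
    case 2
    have "bilin n P (U k) (U k) = (\<Sum>i<n. if i = k then s k else 0)"
      unfolding bilin_def
    proof (intro sum.cong refl)
      fix i assume "i \<in> {..<n}"
      consider "i < k" | "i = k" | "k < i" by linarith
      thus "U k i * (\<Sum>j<n. P i j * U k j) = (if i = k then s k else 0)"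
        by cases (use kl PU_upper U_upper U_diag PU_diag in auto)
    qed
    thus ?thesis using 2 kl by simp
  next
    case 1
    thus ?thesis using below kl by simp
  next
    case 3
    thus ?thesis using below[of l k] kl bilin_commute[of n P "U k" "U l", OF Psym] by simp
  qed
qed

lemma bilin_ge_sum_triangular_squares:
  assumes PG: "\<And>i l. i < n \<Longrightarrow> l < n \<Longrightarrow> (\<Sum>j<n. P i j * G j l) = (if i = l then 1 else 0)"
    and Psym: "\<And>i j. i < n \<Longrightarrow> j < n \<Longrightarrow> P i j = P j i"
    and Ppsd: "\<And>x. 0 \<le> bilin n P x x"
    and U_upper: "\<And>k i. k < i \<Longrightarrow> U k i = 0"
    and U_diag: "\<And>k. U k k = 1"
    and PU_upper: "\<And>k i. k < n \<Longrightarrow> i < k \<Longrightarrow> (\<Sum>j<n. P i j * U k j) = 0"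
    and PU_diag: "\<And>k. k < n \<Longrightarrow> (\<Sum>j<n. P k j * U k j) = s k"
    and s_pos: "\<And>k. k < n \<Longrightarrow> 0 < s k"
  shows "(\<Sum>k<n. (\<Sum>i<n. U k i * y i)\<^sup>2 / s k) \<le> bilin n G y y"
proof -
  define d where "d k = (\<Sum>i<n. U k i * y i)" for k
  define c where "c k = d k / s k" for k
  define u where "u i = (\<Sum>k<n. c k * U k i)" for i
  have "(\<Sum>i<n. u i * y i) = (\<Sum>i<n. \<Sum>k<n. c k * U k i * y i)"
    unfolding u_def by (simp add: sum_distrib_right)
  also have "\<dots> = (\<Sum>k<n. c k * d k)"
    unfolding d_def by (subst sum.swap) (simp add: sum_distrib_left mult.assoc)
  finally have uy: "(\<Sum>i<n. u i * y i) = (\<Sum>k<n. c k * d k)" .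
  have uu: "bilin n P u u = (\<Sum>k<n. c k * c k * s k)"
  proof -
    have "bilin n P u u = (\<Sum>k<n. \<Sum>l<n. c k * c l * bilin n P (U k) (U l))"
      unfolding u_def by (simp add: bilin_sum_left bilin_sum_right bilin_scale_left bilin_scale_right mult.assoc)
    also have "\<dots> = (\<Sum>k<n. \<Sum>l<n. if k = l then c k * c k * s k else 0)"
      using bilin_triangular_orthogonal[OF Psym U_upper U_diag PU_upper PU_diag] by (intro sum.cong) auto
    finally show ?thesis by simp
  qed
  have "(\<Sum>k<n. d k ^ 2 / s k) = 2 * (\<Sum>k<n. c k * d k) - (\<Sum>k<n. c k * c k * s k)"
  proof -
    have "(\<Sum>k<n. d k ^ 2 / s k) = (\<Sum>k<n. 2 * (c k * d k) - c k * c k * s k)"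
      using s_pos by (intro sum.cong) (auto simp: c_def power2_eq_square field_simps)
    thus ?thesis by (simp add: sum_subtractf sum_distrib_left)
  qed
  also have "\<dots> \<le> bilin n G y y" using bilin_ge_dual[OF PG Psym Ppsd, of u y] uy uu by simp
  finally show ?thesis unfolding d_def .
qed

section \<open>Correlation matrices and the coefficients \<open>a\<^sub>k\<close>\<close>

lemma scalar_prod_mult_mat_vec_eq_bilin:
  assumes "A \<in> carrier_mat n n" "v \<in> carrier_vec n" "w \<in> carrier_vec n"
  shows "v \<bullet> (A *\<^sub>v w) = bilin n (\<lambda>i j. A $$ (i,j)) (\<lambda>i. v $ i) (\<lambda>i. w $ i)"
  using assms unfolding bilin_def by (auto simp: scalar_prod_def atLeast0LessThan intro!: sum.cong)

lemma index_mult_mat_eq_sum: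
  assumes "A \<in> carrier_mat n n" "B \<in> carrier_mat n n" "i < n" "l < n"
  shows "(A * B) $$ (i,l) = (\<Sum>j<n. A $$ (i,j) * B $$ (j,l))"
  using assms by (auto simp: scalar_prod_def atLeast0LessThan intro!: sum.cong)

lemma index_mult_mat_vec_eq_sum:
  "A \<in> carrier_mat k k \<Longrightarrow> v \<in> carrier_vec k \<Longrightarrow> i < k \<Longrightarrow> (A *\<^sub>v v) $ i = (\<Sum>j<k. A $$ (i,j) * v $ j)"
  by (auto simp: scalar_prod_def atLeast0LessThan intro!: sum.cong)

lemma mat_inv_eqI:
  assumes A: "A \<in> carrier_mat n n" and B: "B \<in> carrier_mat n n"
    and AB: "A * B = 1\<^sub>m n" and BA: "B * A = 1\<^sub>m n"
  shows "mat_inv A = B"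
  unfolding mat_inv_def
proof (rule the_equality)
  fix C assume "C \<in> carrier_mat (dim_row A) (dim_row A) \<and> A * C = 1\<^sub>m (dim_row A) \<and> C * A = 1\<^sub>m (dim_row A)"
  hence C: "C \<in> carrier_mat n n" "C * A = 1\<^sub>m n" using A by auto
  have "C = C * (A * B)" using C(1) unfolding AB by simp
  also have "\<dots> = B" using C B A by (simp add: assoc_mult_mat[symmetric, OF C(1) A B])
  finally show "C = B" .
qed (use A B AB BA in auto)

lemma mat_inv_symmetric:
  assumes A: "A \<in> carrier_mat n n" and sym: "A\<^sup>T = A" and inv: "invertible_mat A"
  shows "mat_inv A \<in> carrier_mat n n" "A * mat_inv A = 1\<^sub>m n" "mat_inv A * A = 1\<^sub>m n"
    "(mat_inv A)\<^sup>T = mat_inv A"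
proof -
  obtain B where AB: "A * B = 1\<^sub>m n" and BA: "B * A = 1\<^sub>m (dim_row B)"
    using inv A unfolding invertible_mat_def inverts_mat_def by auto
  have B: "B \<in> carrier_mat n n"
    using arg_cong[OF AB, of dim_col] arg_cong[OF BA, of dim_col] A by auto
  with BA have BA': "B * A = 1\<^sub>m n" by simp
  have "mat_inv A = B" by (rule mat_inv_eqI[OF A B AB BA'])
  moreover have "mat_inv A = B\<^sup>T"
  proof (rule mat_inv_eqI)
    show "A * B\<^sup>T = 1\<^sub>m n" using transpose_mult[OF B A] BA' sym by simp
    show "B\<^sup>T * A = 1\<^sub>m n" using transpose_mult[OF A B] AB sym by simp
  qed (use A B in auto)
  ultimately show "mat_inv A \<in> carrier_mat n n" "A * mat_inv A = 1\<^sub>m n" "mat_inv A * A = 1\<^sub>m n"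
    "(mat_inv A)\<^sup>T = mat_inv A" using B AB BA' by auto
qed

lemma lead_sub_carrier: "lead_sub k A \<in> carrier_mat k k"
  unfolding lead_sub_def by simp

lemma index_lead_sub: "i < k \<Longrightarrow> j < k \<Longrightarrow> lead_sub k A $$ (i,j) = A $$ (i,j)"
  unfolding lead_sub_def by simp

lemma lead_sub_mat_inv:
  assumes kn: "k \<le> n"
    and pd: "\<And>x i. bilin n (\<lambda>i j. A $$ (i,j)) x x = 0 \<Longrightarrow> i < n \<Longrightarrow> x i = 0"
  shows "mat_inv (lead_sub k A) \<in> carrier_mat k k" "lead_sub k A * mat_inv (lead_sub k A) = 1\<^sub>m k"
proof -
  define M where "M = lead_sub k A"
  have M: "M \<in> carrier_mat k k" unfolding M_def by (rule lead_sub_carrier)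
  have "v = 0\<^sub>v k" if v: "v \<in> carrier_vec k" "M *\<^sub>v v = 0\<^sub>v k" for v
  proof -
    define x where "x i = (if i < k then v $ i else 0)" for i
    have "bilin n (\<lambda>i j. A $$ (i,j)) x x = bilin k (\<lambda>i j. M $$ (i,j)) (\<lambda>i. v $ i) (\<lambda>i. v $ i)"
      unfolding bilin_def M_def using kn
      by (auto simp: x_def index_lead_sub split: if_splits intro!: sum.mono_neutral_cong_right)
    also have "\<dots> = v \<bullet> (M *\<^sub>v v)" using scalar_prod_mult_mat_vec_eq_bilin[OF M v(1) v(1)] by simp
    finally have "bilin n (\<lambda>i j. A $$ (i,j)) x x = 0" using v by simp
    hence "v $ i = 0" if "i < k" for i using pd[of x i] that kn unfolding x_def by simp
    thus ?thesis using v(1) by (intro eq_vecI) auto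
  qed
  hence "det M \<noteq> 0" using det_0_iff_vec_prod_zero_field[OF M] by blast
  hence "M \<in> Units (ring_mat TYPE(real) k ())" by (rule det_non_zero_imp_unit[OF M])
  then obtain B where B: "B \<in> carrier_mat k k" "B * M = 1\<^sub>m k" "M * B = 1\<^sub>m k"
    unfolding Units_def ring_mat_def by auto
  have "mat_inv M = B" by (rule mat_inv_eqI[OF M B(1) B(3) B(2)])
  thus "mat_inv (lead_sub k A) \<in> carrier_mat k k" "lead_sub k A * mat_inv (lead_sub k A) = 1\<^sub>m k"
    using B unfolding M_def by simp_all
qed

text \<open>The rows \<open>U\<close> form the unit lower-triangular matrix with \<open>U \<Psi> U\<^sup>T\<close> diagonal (the inverse
  of the factor \<open>L\<close> in \<open>\<Psi> = L D L\<^sup>T\<close>); its diagonal entries are the Schur complements \<open>1 / a_(k+1)\<close>.\<close>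
lemma a_coef_schur_rows:
  fixes Psi :: "real mat"
  assumes kn: "k < n"
    and pd: "\<And>x i. bilin n (\<lambda>i j. Psi $$ (i,j)) x x = 0 \<Longrightarrow> i < n \<Longrightarrow> x i = 0"
  defines "c \<equiv> mat_inv (lead_sub k Psi) *\<^sub>v vec k (\<lambda>i. Psi $$ (i,k))"
  defines "U \<equiv> \<lambda>i. if i < k then - ((c :: real Matrix.vec) $ i) else if i = k then 1 else 0"
  shows "\<And>i. i < k \<Longrightarrow> (\<Sum>j<n. Psi $$ (i,j) * U j) = 0"
    and "(\<Sum>j<n. Psi $$ (k,j) * U j) = inverse (a_coef Psi (Suc k))"
proof -
  have inv: "mat_inv (lead_sub k Psi) \<in> carrier_mat k k" "lead_sub k Psi * mat_inv (lead_sub k Psi) = 1\<^sub>m k"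
    using lead_sub_mat_inv[of k n Psi] pd kn by auto
  have c: "c \<in> carrier_vec k" using inv kn unfolding c_def by auto
  have row: "(\<Sum>j<n. f j * U j) = f k - (\<Sum>j<k. f j * c $ j)" for f
  proof -
    have "(\<Sum>j<n. f j * U j) = (\<Sum>j<Suc k. f j * U j)"
      using kn by (intro sum.mono_neutral_right) (auto simp: U_def)
    also have "\<dots> = f k - (\<Sum>j<k. f j * c $ j)" by (simp add: U_def sum_negf)
    finally show ?thesis .
  qed
  show "(\<Sum>j<n. Psi $$ (i,j) * U j) = 0" if i: "i < k" for i
  proof -
    have "lead_sub k Psi *\<^sub>v c = (lead_sub k Psi * mat_inv (lead_sub k Psi)) *\<^sub>v vec k (\<lambda>i. Psi $$ (i,k))"
      unfolding c_def using inv kn lead_sub_carrier by (subst assoc_mult_mat_vec) auto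
    also have "\<dots> = vec k (\<lambda>i. Psi $$ (i,k))" using inv kn by simp
    finally have "(lead_sub k Psi *\<^sub>v c) $ i = Psi $$ (i,k)" using i by simp
    hence "(\<Sum>j<k. Psi $$ (i,j) * c $ j) = Psi $$ (i,k)"
      using i c by (simp add: index_mult_mat_vec_eq_sum[OF lead_sub_carrier] index_lead_sub)
    thus ?thesis using row by simp
  qed
  have "vec k (\<lambda>j. Psi $$ (k, j)) \<bullet> c = (\<Sum>j<k. Psi $$ (k,j) * c $ j)"
    using c unfolding scalar_prod_def by (auto simp: atLeast0LessThan intro!: sum.cong)
  thus "(\<Sum>j<n. Psi $$ (k,j) * U j) = inverse (a_coef Psi (Suc k))"
    using row by (cases "k = 0") (simp_all add: a_coef_def c_def)
qed

lemma correlation_mat_quad_form_ge: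
  fixes Gm :: "real mat"
  assumes cm: "correlation_mat n Gm" and inv: "invertible_mat Gm"
    and a_pos: "\<And>k. 1 \<le> k \<Longrightarrow> k \<le> n \<Longrightarrow> 0 < a_coef (mat_inv Gm) k"
  obtains U where "\<And>y. y \<in> carrier_vec n \<Longrightarrow>
    (\<Sum>k<n. a_coef (mat_inv Gm) (Suc k) * (y $ k + (\<Sum>i<k. U k i * y $ i))\<^sup>2) \<le> y \<bullet> (Gm *\<^sub>v y)"
proof -
  define Psi where "Psi = mat_inv Gm"
  define G where "G i j = Gm $$ (i,j)" for i j
  define P where "P i j = Psi $$ (i,j)" for i j
  have Gm: "Gm \<in> carrier_mat n n" "Gm\<^sup>T = Gm" "\<And>x. x \<in> carrier_vec n \<Longrightarrow> 0 \<le> x \<bullet> (Gm *\<^sub>v x)"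
    using cm unfolding correlation_mat_def by auto
  note Psi = mat_inv_symmetric[OF Gm(1,2) inv, folded Psi_def]
  have PG: "(\<Sum>j<n. P i j * G j l) = (if i = l then 1 else 0)"
    and GP: "(\<Sum>j<n. G i j * P j l) = (if i = l then 1 else 0)" if "i < n" "l < n" for i l
    using index_mult_mat_eq_sum[OF Psi(1) Gm(1) that] index_mult_mat_eq_sum[OF Gm(1) Psi(1) that]
      Psi(2,3) that unfolding P_def G_def by simp_all
  have Gsym: "G i j = G j i" and Psym: "P i j = P j i" if "i < n" "j < n" for i j
    using that arg_cong[OF Gm(2), of "\<lambda>M. M $$ (i,j)"] arg_cong[OF Psi(4), of "\<lambda>M. M $$ (i,j)"] Gm(1) Psi(1)
    unfolding G_def P_def by simp_all
  have Gpsd: "0 \<le> bilin n G x x" for x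
  proof -
    have "bilin n G x x = vec n x \<bullet> (Gm *\<^sub>v vec n x)"
      unfolding scalar_prod_mult_mat_vec_eq_bilin[OF Gm(1) vec_carrier vec_carrier] G_def
      by (intro bilin_cong) auto
    thus ?thesis using Gm(3)[of "vec n x"] by simp
  qed
  note P_pos_def = bilin_inverse_pos_def[OF GP Gsym Gpsd]
  define c where "c k = mat_inv (lead_sub k Psi) *\<^sub>v vec k (\<lambda>i. Psi $$ (i,k))" for k
  define U where "U k i = (if i < k then - (c k $ i) else if i = k then 1 else 0)" for k i
  define s where "s k = inverse (a_coef Psi (Suc k))" for k
  have PU: "\<And>i. i < k \<Longrightarrow> (\<Sum>j<n. P i j * U k j) = 0" "(\<Sum>j<n. P k j * U k j) = s k" if "k < n" for k
    using a_coef_schur_rows[of k n Psi] P_pos_def(2) that unfolding P_def U_def c_def s_def by auto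
  have s_pos: "0 < s k" if "k < n" for k using a_pos[of "Suc k"] that unfolding s_def Psi_def by simp
  have U_row: "(\<Sum>i<n. U k i * y i) = y k + (\<Sum>i<k. U k i * y i)" if "k < n" for k y
  proof -
    have "(\<Sum>i<n. U k i * y i) = (\<Sum>i<Suc k. U k i * y i)"
      using that by (intro sum.mono_neutral_right) (auto simp: U_def)
    thus ?thesis by (simp add: U_def)
  qed
  show ?thesis
  proof
    fix y :: "real Matrix.vec" assume y: "y \<in> carrier_vec n"
    have "(\<Sum>k<n. a_coef (mat_inv Gm) (Suc k) * (y $ k + (\<Sum>i<k. U k i * y $ i))\<^sup>2)
        = (\<Sum>k<n. (\<Sum>i<n. U k i * y $ i)\<^sup>2 / s k)"
      by (intro sum.cong refl) (simp add: U_row s_def Psi_def divide_inverse_commute)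
    also have "\<dots> \<le> bilin n G (\<lambda>i. y $ i) (\<lambda>i. y $ i)"
      by (rule bilin_ge_sum_triangular_squares[OF PG Psym P_pos_def(1), of U s])
        (use PU s_pos in \<open>auto simp: U_def\<close>)
    also have "\<dots> = y \<bullet> (Gm *\<^sub>v y)"
      using scalar_prod_mult_mat_vec_eq_bilin[OF Gm(1) y y] unfolding G_def by simp
    finally show "(\<Sum>k<n. a_coef (mat_inv Gm) (Suc k) * (y $ k + (\<Sum>i<k. U k i * y $ i))\<^sup>2)
      \<le> y \<bullet> (Gm *\<^sub>v y)" .
  qed
qed

section \<open>The sum over \<open>M_set\<close>\<close>

lemma M_set_subset_int_box:
  "M_set n q \<subseteq> (\<lambda>f. vec n (\<lambda>i. real_of_int (f i))) ` Pi\<^sub>E {..<n} (\<lambda>_. {- int q..int q})"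
proof
  fix y assume "y \<in> M_set n q"
  hence y: "y \<in> carrier_vec n" "\<And>i. i < n \<Longrightarrow> y $ i \<in> \<int> \<and> - real q / 2 \<le> y $ i \<and> y $ i < real q / 2"
    unfolding M_set_def by auto
  define f where "f = restrict (\<lambda>i. \<lfloor>y $ i\<rfloor>) {..<n}"
  have fy: "real_of_int \<lfloor>y $ i\<rfloor> = y $ i" if "i < n" for i
    using y(2)[OF that] by (auto elim: Ints_cases)
  have "\<lfloor>y $ i\<rfloor> \<in> {- int q..int q}" if "i < n" for i
  proof -
    have "- real q \<le> real_of_int \<lfloor>y $ i\<rfloor>" "real_of_int \<lfloor>y $ i\<rfloor> \<le> real q"
      using y(2)[OF that] fy[OF that] by auto
    thus ?thesis by simp
  qed
  hence "f \<in> Pi\<^sub>E {..<n} (\<lambda>_. {- int q..int q})" unfolding f_def by auto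
  moreover have "y = vec n (\<lambda>i. real_of_int (f i))"
    using y(1) by (intro eq_vecI) (simp_all add: f_def fy)
  ultimately show "y \<in> (\<lambda>f. vec n (\<lambda>i. real_of_int (f i))) ` Pi\<^sub>E {..<n} (\<lambda>_. {- int q..int q})"
    by blast
qed

text \<open>The completed squares of \<open>correlation_mat_quad_form_ge\<close> turn the exponential of the
  quadratic form into a product of triangular Gaussian factors, one per coordinate.\<close>
lemma sum_M_set_exp_quad_form_le:
  fixes Gm :: "real mat" and L :: real
  assumes cm: "correlation_mat n Gm" and inv: "invertible_mat Gm" and L: "0 < L"
    and large: "\<And>k. 1 \<le> k \<Longrightarrow> k \<le> n \<Longrightarrow> 500 \<le> L * a_coef (mat_inv Gm) k"
  shows "(\<Sum>y\<in>M_set n q. exp (- L * (y \<bullet> (Gm *\<^sub>v y))))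
    \<le> exp (3 * (\<Sum>k=1..n. exp (- L * a_coef (mat_inv Gm) k)))"
proof -
  define a where "a k = a_coef (mat_inv Gm) k" for k
  have "0 < a k" if "1 \<le> k" "k \<le> n" for k
  proof -
    have "0 < L * a k" using large[OF that] unfolding a_def by linarith
    thus ?thesis using L by (simp add: zero_less_mult_iff)
  qed
  then obtain U where U: "\<And>y. y \<in> carrier_vec n \<Longrightarrow>
      (\<Sum>k<n. a (Suc k) * (y $ k + (\<Sum>i<k. U k i * y $ i))\<^sup>2) \<le> y \<bullet> (Gm *\<^sub>v y)"
    using correlation_mat_quad_form_ge[OF cm inv] unfolding a_def by blast
  define u where "u k = L * a (Suc k)" for k
  define B where "B = Pi\<^sub>E {..<n} (\<lambda>_. {- int q..int q})"
  define vec_of where "vec_of f = vec n (\<lambda>i. real_of_int (f i))" for f :: "nat \<Rightarrow> int"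
  define h where "h y = exp (- L * (y \<bullet> (Gm *\<^sub>v y)))" for y
  have B: "finite B" unfolding B_def by (intro finite_PiE) auto
  have "inj_on vec_of B"
  proof (rule inj_onI)
    fix f f' assume f: "f \<in> B" "f' \<in> B" and eq: "vec_of f = vec_of f'"
    have "f i = f' i" if "i < n" for i
      using arg_cong[OF eq, of "\<lambda>v. v $ i"] that unfolding vec_of_def by simp
    thus "f = f'" using f unfolding B_def by (intro PiE_ext) auto
  qed
  have "(\<Sum>y\<in>M_set n q. h y) \<le> (\<Sum>y\<in>vec_of ` B. h y)"
    using M_set_subset_int_box[of n q] B unfolding vec_of_def B_def h_def by (intro sum_mono2) auto
  also have "\<dots> = (\<Sum>f\<in>B. h (vec_of f))" using \<open>inj_on vec_of B\<close> by (simp add: sum.reindex)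
  also have "\<dots> \<le> (\<Sum>f\<in>B. \<Prod>k<n. triangular_gauss_factor u U k f)"
  proof (rule sum_mono)
    fix f
    have "h (vec_of f) \<le> exp (- L * (\<Sum>k<n. a (Suc k) * (of_int (f k) + (\<Sum>i<k. U k i * of_int (f i)))\<^sup>2))"
      using U[of "vec_of f"] L unfolding h_def vec_of_def by simp
    also have "\<dots> = (\<Prod>k<n. triangular_gauss_factor u U k f)"
      unfolding triangular_gauss_factor_def u_def
      by (simp add: sum_distrib_left exp_sum[symmetric] sum_negf[symmetric] mult.assoc)
    finally show "h (vec_of f) \<le> (\<Prod>k<n. triangular_gauss_factor u U k f)" .
  qed
  also have "\<dots> \<le> (\<Prod>k<n. exp (3 * exp (- u k)))"
    using large unfolding u_def a_def B_def by (intro sum_PiE_prod_triangular_gauss_factor_le) auto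
  also have "\<dots> = exp (3 * (\<Sum>k<n. exp (- u k)))" by (simp add: exp_sum sum_distrib_left)
  also have "(\<Sum>k<n. exp (- u k)) = (\<Sum>k=1..n. exp (- L * a k))"
    unfolding u_def by (simp add: sum.atLeast1_atMost_eq)
  finally show ?thesis unfolding h_def a_def .
qed

lemma SUP_max_norm_mat_inv_ge_1:
  assumes "correlation_condition Gam g"
  shows "1 \<le> (SUP n\<in>{1..}. max_norm (mat_inv (Gam n)))"
proof -
  have "correlation_mat 1 (Gam 1)" and bdd: "bdd_above ((\<lambda>n. max_norm (mat_inv (Gam n))) ` {1..})"
    using assms unfolding correlation_condition_def by auto
  hence "Gam 1 = 1\<^sub>m 1" unfolding correlation_mat_def by (intro eq_matI) auto
  moreover have "mat_inv (1\<^sub>m 1 :: real mat) = 1\<^sub>m 1" by (rule mat_inv_eqI) auto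
  moreover have "{\<bar>(1\<^sub>m 1 :: real mat) $$ (a,b)\<bar> | a b. a < 1 \<and> b < 1} = {1}" by auto
  ultimately have "max_norm (mat_inv (Gam 1)) = 1" unfolding max_norm_def by simp
  moreover have "max_norm (mat_inv (Gam 1)) \<le> (SUP n\<in>{1..}. max_norm (mat_inv (Gam n)))"
    by (rule cSUP_upper[OF _ bdd]) auto
  ultimately show ?thesis by simp
qed

text \<open>Pick \<open>A \<ge> 1\<close> with \<open>g A < exp (-1000)\<close>; then every \<open>a_k log (A n)\<close> exceeds \<open>1000\<close>, and
  \<open>log (A n) \<le> 2 log (\<alpha> n)\<close> for \<open>n \<ge> A\<close>.\<close>
lemma eventually_a_coef_large:
  assumes cc: "correlation_condition Gam g" and \<alpha>: "1 \<le> \<alpha>"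
  shows "eventually (\<lambda>n. \<forall>k\<in>{1..n}. 500 \<le> ln (\<alpha> * real n) * a_coef (mat_inv (Gam n)) k) sequentially"
proof -
  have g_lim: "(g \<longlongrightarrow> 0) at_top"
    and g_sum: "\<And>x n. 1 \<le> x \<Longrightarrow> 1 \<le> n \<Longrightarrow> (\<Sum>k=1..n. (x * real n) powr (- a_coef (mat_inv (Gam n)) k)) \<le> g x"
    using cc unfolding correlation_condition_def by auto
  have "eventually (\<lambda>x. 1 \<le> x \<and> g x < exp (-1000)) at_top"
    using order_tendstoD(2)[OF g_lim, of "exp (-1000)"] eventually_ge_at_top[of 1]
    by (simp add: eventually_conj_iff)
  then obtain A where A: "1 \<le> A" "g A < exp (-1000)" unfolding eventually_at_top_linorder by auto
  show ?thesis
    using eventually_ge_at_top[of "max 2 (nat \<lceil>A\<rceil>)"]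
  proof eventually_elim
    case (elim n)
    hence n: "2 \<le> real n" "A \<le> real n" by linarith+
    have An: "1 < A * real n" using A(1) n mult_mono[of 1 A 2 "real n"] by simp
    have ln_An: "ln (A * real n) \<le> 2 * ln (\<alpha> * real n)"
    proof -
      have "A * real n \<le> (\<alpha> * real n)\<^sup>2"
        using n \<alpha> A(1) mult_mono[of A "\<alpha> * real n" "real n" "\<alpha> * real n"] by (simp add: power2_eq_square)
      hence "ln (A * real n) \<le> ln ((\<alpha> * real n)\<^sup>2)" using An by (intro ln_mono) auto
      thus ?thesis using n \<alpha> by (simp add: ln_realpow)
    qed
    show ?case
    proof
      fix k assume k: "k \<in> {1..n}"
      define a where "a = a_coef (mat_inv (Gam n)) k"
      have "exp (- a * ln (A * real n)) = (A * real n) powr (- a)"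
        using An A(1) n by (simp add: powr_def mult.commute)
      also have "\<dots> \<le> (\<Sum>k=1..n. (A * real n) powr (- a_coef (mat_inv (Gam n)) k))"
        unfolding a_def using k by (intro member_le_sum) auto
      also have "\<dots> < exp (-1000)" using g_sum[OF A(1), of n] A(2) k by simp
      finally have "1000 < a * ln (A * real n)" by simp
      moreover have "0 < ln (A * real n)" using An by simp
      ultimately have "0 < a" "1000 < a * ln (A * real n)"
        using zero_less_mult_pos2[of a "ln (A * real n)"] by auto
      hence "1000 < a * (2 * ln (\<alpha> * real n))" using ln_An mult_left_mono[OF ln_An, of a] by linarith
      thus "500 \<le> ln (\<alpha> * real n) * a_coef (mat_inv (Gam n)) k" unfolding a_def by (simp add: mult.commute)
    qed
  qed
qed

theorem mainTheorem6:
  fixes Gam :: "nat \<Rightarrow> real mat" and g :: "real \<Rightarrow> real" and \<alpha> S :: real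
  assumes "correlation_condition Gam g"
    and "S = (SUP n\<in>{1..}. max_norm (mat_inv (Gam n)))"
    and "\<alpha> \<ge> 1"
  shows "\<exists>n0. \<forall>n\<ge>n0. \<forall>q::nat. q > 0 \<longrightarrow>
     (\<Sum>y\<in>M_set n q. exp (- ln (\<alpha> * real n) * (y \<bullet> (Gam n *\<^sub>v y))))
       \<le> exp ((2 + S) * g \<alpha>)"
proof -
  have Gam: "\<And>n. 1 \<le> n \<Longrightarrow> correlation_mat n (Gam n) \<and> invertible_mat (Gam n)"
    and g_sum: "\<And>n. 1 \<le> n \<Longrightarrow> (\<Sum>k=1..n. (\<alpha> * real n) powr (- a_coef (mat_inv (Gam n)) k)) \<le> g \<alpha>"
    using assms(1,3) unfolding correlation_condition_def by auto
  have "3 * g \<alpha> \<le> (2 + S) * g \<alpha>"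
    using SUP_max_norm_mat_inv_ge_1[OF assms(1)] assms unfolding correlation_condition_def
    by (intro mult_right_mono) auto
  moreover obtain n0 where n0: "\<And>n. n0 \<le> n \<Longrightarrow>
      2 \<le> n \<and> (\<forall>k\<in>{1..n}. 500 \<le> ln (\<alpha> * real n) * a_coef (mat_inv (Gam n)) k)"
    using eventually_conj[OF eventually_ge_at_top[of 2] eventually_a_coef_large[OF assms(1,3)]]
    unfolding eventually_at_top_linorder by auto
  moreover have "(\<Sum>y\<in>M_set n q. exp (- ln (\<alpha> * real n) * (y \<bullet> (Gam n *\<^sub>v y)))) \<le> exp (3 * g \<alpha>)"
    if "n0 \<le> n" for n q
  proof -
    have n: "2 \<le> n" "1 < \<alpha> * real n" using n0[OF that] assms(3) mult_mono[of 1 \<alpha> 2 "real n"] by auto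
    have "(\<Sum>y\<in>M_set n q. exp (- ln (\<alpha> * real n) * (y \<bullet> (Gam n *\<^sub>v y))))
        \<le> exp (3 * (\<Sum>k=1..n. exp (- ln (\<alpha> * real n) * a_coef (mat_inv (Gam n)) k)))"
      using Gam[of n] n n0[OF that] by (intro sum_M_set_exp_quad_form_le) auto
    also have "\<dots> = exp (3 * (\<Sum>k=1..n. (\<alpha> * real n) powr (- a_coef (mat_inv (Gam n)) k)))"
      using n assms(3) by (simp add: powr_def mult.commute)
    also have "\<dots> \<le> exp (3 * g \<alpha>)" using g_sum[of n] n by simp
    finally show ?thesis .
  qed
  ultimately show ?thesis by (meson exp_le_cancel_iff order_trans)
qed

end
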